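(* Let $p$ be an odd prime and $G$ a finite non-abelian $2$-generated $p$-group with cyclic $G'$, with parameters $m,n_1,n_2,o_1,o_2,o'_1,o'_2$ as in the context. Then $\min_{\mathrm{lex}}\{(|b_1{\rm C}_G(G')|,|b_2{\rm C}_G(G')|,-|b_1|,-|b_2|):(b_1,b_2)\in\mathcal{B}\}=(p^{o_1},p^{o_2},-p^{n_1+o'_1},-p^{n_2+o'_2})$.
   Context: Conventions: $[x,y]=x^{-1}y^{-1}xy$, $x^y=y^{-1}xy$. Let $|G'|=p^m$, $G/G'\cong C_{p^{n_1}}\times C_{p^{n_2}}$, $n_1\ge n_2\ge1$. A basis is a pair $(b_1,b_2)$ with $G/G'=\langle b_1G'\rangle\times\langle b_2G'\rangle$ and $|b_iG'|=p^{n_i}$; $\mathcal{B}$ is the set of bases. For $g\in G$, $p^{o(g)}=|g{\rm C}_G(G')|$ (order in $G/{\rm C}_G(G')$). $(o_1,o_2)=\min_{\mathrm{lex}}\{(o(b_1),o(b_2)):(b_1,b_2)\in\mathcal{B}\}$; $r_1=1+p^{m-o_1}$; $r_2=1+p^{m-o_2}$ if $o_2>o_1$, else $r_2=r_1^{p^{o_1-o_2}}$. $\mathcal{B}_r$ is the (nonempty) set of bases with $x^{b_i}=x^{r_i}$ for all $x\in G'$, $i=1,2$. For $b\in\mathcal{B}$, $o'_i(b)$ is defined by $|b_i|=p^{n_i+o'_i(b)}$, and $(o'_1,o'_2)=\max_{\mathrm{lex}}\{(o'_1(b),o'_2(b)):b\in\mathcal{B}_r\}$. *)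

theory Defs
  imports "HOL-Algebra.Algebra" "HOL-Library.Product_Lexorder"
begin

(* Pairs/tuples are ordered lexicographically (Product_Lexorder), so Min/Max
   over a finite set of tuples are the lex-min / lex-max of the paper. *)

abbreviation commutator_sub :: "('a,'b) monoid_scheme \<Rightarrow> 'a set" where
  "commutator_sub G \<equiv> derived G (carrier G)"

definition centralizer :: "('a,'b) monoid_scheme \<Rightarrow> 'a set \<Rightarrow> 'a set" where
  "centralizer G A = {g \<in> carrier G. \<forall>a\<in>A. g \<otimes>\<^bsub>G\<^esub> a = a \<otimes>\<^bsub>G\<^esub> g}"

definition coset_ord :: "('a,'b) monoid_scheme \<Rightarrow> 'a set \<Rightarrow> 'a \<Rightarrow> nat" where
  "coset_ord G H g = group.ord (G Mod H) (H #>\<^bsub>G\<^esub> g)"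

definition is_basis :: "('a,'b) monoid_scheme \<Rightarrow> nat \<Rightarrow> nat \<Rightarrow> nat \<Rightarrow> 'a \<Rightarrow> 'a \<Rightarrow> bool" where
  "is_basis G p n1 n2 b1 b2 \<longleftrightarrow>
     b1 \<in> carrier G \<and> b2 \<in> carrier G \<and>
     (let Q = G Mod commutator_sub G;
          c1 = commutator_sub G #>\<^bsub>G\<^esub> b1;
          c2 = commutator_sub G #>\<^bsub>G\<^esub> b2
      in generate Q {c1, c2} = carrier Q \<and>
         generate Q {c1} \<inter> generate Q {c2} = {\<one>\<^bsub>Q\<^esub>}) \<and>
     coset_ord G (commutator_sub G) b1 = p ^ n1 \<and>
     coset_ord G (commutator_sub G) b2 = p ^ n2"

definition bases :: "('a,'b) monoid_scheme \<Rightarrow> nat \<Rightarrow> nat \<Rightarrow> nat \<Rightarrow> ('a \<times> 'a) set" where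
  "bases G p n1 n2 = {(b1, b2). is_basis G p n1 n2 b1 b2}"

definition o_exp :: "('a,'b) monoid_scheme \<Rightarrow> nat \<Rightarrow> 'a \<Rightarrow> nat" where
  "o_exp G p g = (THE k. coset_ord G (centralizer G (commutator_sub G)) g = p ^ k)"

definition o_min :: "('a,'b) monoid_scheme \<Rightarrow> nat \<Rightarrow> nat \<Rightarrow> nat \<Rightarrow> nat \<times> nat" where
  "o_min G p n1 n2 = Min ((\<lambda>(b1, b2). (o_exp G p b1, o_exp G p b2)) ` bases G p n1 n2)"

definition r_pair :: "('a,'b) monoid_scheme \<Rightarrow> nat \<Rightarrow> nat \<Rightarrow> nat \<Rightarrow> nat \<Rightarrow> nat \<times> nat" where
  "r_pair G p m n1 n2 =
     (let o1 = fst (o_min G p n1 n2); o2 = snd (o_min G p n1 n2);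
          r1 = 1 + p ^ (m - o1)
      in (r1, if o2 > o1 then 1 + p ^ (m - o2) else r1 ^ (p ^ (o1 - o2))))"

definition bases_r :: "('a,'b) monoid_scheme \<Rightarrow> nat \<Rightarrow> nat \<Rightarrow> nat \<Rightarrow> nat \<Rightarrow> ('a \<times> 'a) set" where
  "bases_r G p m n1 n2 =
     {(b1, b2) \<in> bases G p n1 n2.
        \<forall>x \<in> commutator_sub G.
          inv\<^bsub>G\<^esub> b1 \<otimes>\<^bsub>G\<^esub> x \<otimes>\<^bsub>G\<^esub> b1 = x [^]\<^bsub>G\<^esub> fst (r_pair G p m n1 n2) \<and>
          inv\<^bsub>G\<^esub> b2 \<otimes>\<^bsub>G\<^esub> x \<otimes>\<^bsub>G\<^esub> b2 = x [^]\<^bsub>G\<^esub> snd (r_pair G p m n1 n2)}"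

definition o'_exp :: "('a,'b) monoid_scheme \<Rightarrow> nat \<Rightarrow> nat \<Rightarrow> 'a \<Rightarrow> nat" where
  "o'_exp G p n b = (THE k. group.ord G b = p ^ (n + k))"

definition o'_max :: "('a,'b) monoid_scheme \<Rightarrow> nat \<Rightarrow> nat \<Rightarrow> nat \<Rightarrow> nat \<Rightarrow> nat \<times> nat" where
  "o'_max G p m n1 n2 =
     Max ((\<lambda>(b1, b2). (o'_exp G p n1 b1, o'_exp G p n2 b2)) ` bases_r G p m n1 n2)"

end

theory Submission
  imports Defs "HOL-Number_Theory.Number_Theory"
begin

(* Since G' = <c> is cyclic of order p^m, every g acts on G' as x |-> x^s for a unit s modulo p^m,
   and |g C_G(G')| is the multiplicative order of s.  Replacing b_i by b_i^j with j prime to p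
   preserves the basis property, |b_i| and |b_i C_G(G')|, and replaces s by s^j; since the units
   modulo p^m form a cyclic group, every unit of the same order as s arises in this way.  As r_i has
   order p^(o_i) modulo p^m, every basis with (o(b_1), o(b_2)) = (o_1, o_2) can therefore be moved
   into B_r without changing (|b_1|, |b_2|).  So the lexicographic minimum is obtained by first
   minimizing (o(b_1), o(b_2)) over all bases and then maximizing (|b_1|, |b_2|) over B_r. *)

lemma Min_image_lex_refine:
  fixes k :: "'x \<Rightarrow> 'a::linorder \<times> 'b::linorder" and h :: "'x \<Rightarrow> 'c::linorder"
  assumes "finite S" and "S \<noteq> {}"
  shows "Min ((\<lambda>x. (fst (k x), snd (k x), h x)) ` S)
           = (fst (Min (k ` S)), snd (Min (k ` S)), Min (h ` {x \<in> S. k x = Min (k ` S)}))"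
proof -
  define m where "m = Min (k ` S)"
  define S0 where "S0 = {x \<in> S. k x = m}"
  have "m \<in> k ` S" using assms by (simp add: m_def)
  hence "S0 \<noteq> {}" by (auto simp: S0_def)
  moreover have "finite S0" using assms(1) by (simp add: S0_def)
  ultimately have "Min (h ` S0) \<in> h ` S0" by simp
  then obtain x0 where x0: "x0 \<in> S" "k x0 = m" "h x0 = Min (h ` S0)" by (auto simp: S0_def)
  show ?thesis unfolding m_def[symmetric] S0_def[symmetric]
  proof (rule Min_eqI)
    show "finite ((\<lambda>x. (fst (k x), snd (k x), h x)) ` S)" using assms(1) by simp
    show "(fst m, snd m, Min (h ` S0)) \<in> (\<lambda>x. (fst (k x), snd (k x), h x)) ` S"
      using x0 by (intro image_eqI[of _ _ x0]) simp_all
    fix y assume "y \<in> (\<lambda>x. (fst (k x), snd (k x), h x)) ` S"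
    then obtain x where x: "x \<in> S" and y: "y = (fst (k x), snd (k x), h x)" by blast
    have "m \<le> k x" using assms(1) x by (simp add: m_def)
    show "(fst m, snd m, Min (h ` S0)) \<le> y"
    proof (cases "k x = m")
      case True
      hence "Min (h ` S0) \<le> h x" using x \<open>finite S0\<close> by (simp add: S0_def)
      thus ?thesis unfolding y True by (simp add: less_eq_prod_def)
    next
      case False
      hence "m < k x" using \<open>m \<le> k x\<close> by simp
      thus ?thesis unfolding y less_prod_def less_eq_prod_def by auto
    qed
  qed
qed

lemma antimono_Min_commute:
  assumes "antimono f" and "finite A" and "A \<noteq> {}"
  shows "f (Max A) = Min (f ` A)"
proof (rule Min_eqI [symmetric])
  show "finite (f ` A)" using assms(2) by simp
  show "f (Max A) \<in> f ` A" using assms(2,3) by simp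
  fix x assume "x \<in> f ` A"
  then obtain y where "y \<in> A" and x: "x = f y" ..
  hence "y \<le> Max A" using assms(2) by simp
  thus "f (Max A) \<le> x" unfolding x by (rule antimonoD[OF assms(1)])
qed

lemma mono_map_prod_lex:
  fixes f :: "'a::linorder \<Rightarrow> 'c::linorder" and g :: "'b::order \<Rightarrow> 'd::order"
  assumes "strict_mono f" and "mono g"
  shows "mono (map_prod f g)"
proof (rule monoI)
  fix x y :: "'a \<times> 'b"
  assume "x \<le> y"
  then consider "fst x < fst y" | "fst x = fst y" "snd x \<le> snd y"
    unfolding less_eq_prod_def by fastforce
  thus "map_prod f g x \<le> map_prod f g y"
  proof cases
    case 1
    hence "f (fst x) < f (fst y)" by (rule strict_monoD[OF assms(1)])
    thus ?thesis by (simp add: less_eq_prod_def)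
  next
    case 2
    hence "g (snd x) \<le> g (snd y)" by (intro monoD[OF assms(2)])
    thus ?thesis using 2 by (simp add: less_eq_prod_def)
  qed
qed

lemma strict_mono_int_power:
  fixes p :: nat
  assumes "p > 1"
  shows "strict_mono (\<lambda>e. int (p ^ (n + e)))"
  using assms by (intro strict_monoI) (simp add: power_strict_increasing)

lemma antimono_map_prod_uminus:
  "antimono (map_prod uminus uminus :: 'a::ordered_ab_group_add \<times> 'b::ordered_ab_group_add \<Rightarrow> _)"
proof (rule antimonoI)
  fix x y :: "'a \<times> 'b"
  assume "x \<le> y"
  thus "map_prod uminus uminus y \<le> map_prod uminus uminus x" by (simp add: less_eq_prod_def)
qed

lemma one_plus_prime_power_pow_prime:
  fixes p a u :: nat
  assumes p: "Factorial_Ring.prime p" "odd p" and a: "a \<ge> 1" and u: "\<not> p dvd u"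
  shows "\<exists>v. \<not> p dvd v \<and> (1 + p^a*u)^p = 1 + p^(Suc a)*v"
proof -
  define f where "f i = (p choose i) * (p^a*u)^i" for i
  have p3: "p \<ge> 3"
    using p prime_ge_2_nat[of p] by (metis le_antisym not_less_eq_eq numeral_2_eq_2 numeral_3_eq_3 even_numeral)
  have "(1 + p^a*u)^p = (\<Sum>i\<le>p. f i)"
    using binomial[of "p^a*u" 1 p] by (simp add: f_def add.commute[of 1])
  also have "{..p} = {0,1} \<union> {2..p}" using p3 by auto
  also have "sum f ({0,1} \<union> {2..p}) = 1 + p^(Suc a)*u + sum f {2..p}"
    by (subst sum.union_disjoint) (auto simp: f_def)
  finally have expand: "(1 + p^a*u)^p = 1 + p^(Suc a)*u + sum f {2..p}" .
  \<comment> \<open>the middle binomial coefficients contribute a factor p, the last term has a * p \<ge> a + 2\<close>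
  have "p^(a+2) dvd sum f {2..p}"
  proof (rule dvd_sum)
    fix i assume i: "i \<in> {2..p}"
    show "p^(a+2) dvd f i"
    proof (cases "i = p")
      case True
      have "a + 2 \<le> a * p" using a p3 mult_le_mono2[of 3 p a] by linarith
      hence "p^(a+2) dvd p^(a*p)" by (rule le_imp_power_dvd)
      thus ?thesis using True by (simp add: f_def power_mult_distrib power_mult)
    next
      case False
      with i have "0 < i" "i < p" by auto
      hence "p dvd (p choose i)" using p(1) by (intro dvd_choose_prime) auto
      moreover have "p^(a+1) dvd (p^a)^i"
      proof -
        have "a + 1 \<le> a * i" using a i by (cases i) (auto simp: algebra_simps)
        hence "p^(a+1) dvd p^(a*i)" by (rule le_imp_power_dvd)
        thus ?thesis by (simp add: power_mult)
      qed
      ultimately have "p * p^(a+1) dvd (p choose i) * (p^a)^i * u^i"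
        by (intro dvd_mult2 mult_dvd_mono)
      thus ?thesis by (simp add: f_def power_mult_distrib mult.assoc)
    qed
  qed
  then obtain w where w: "sum f {2..p} = p^(a+2)*w" by (elim dvdE)
  have "(1 + p^a*u)^p = 1 + p^(Suc a)*(u + p*w)"
    using expand w by (simp add: algebra_simps)
  moreover have "\<not> p dvd (u + p*w)" using u by (simp add: dvd_add_left_iff)
  ultimately show ?thesis by blast
qed

lemma one_plus_prime_power_pow:
  fixes p a u j :: nat
  assumes p: "Factorial_Ring.prime p" "odd p" and a: "a \<ge> 1" and u: "\<not> p dvd u"
  shows "\<exists>v. \<not> p dvd v \<and> (1 + p^a*u)^(p^j) = 1 + p^(a+j)*v"
proof (induction j)
  case 0
  then show ?case using u by auto
next
  case (Suc j)
  then obtain v where v: "\<not> p dvd v" "(1 + p^a*u)^(p^j) = 1 + p^(a+j)*v" by blast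
  obtain w where w: "\<not> p dvd w" "(1 + p^(a+j)*v)^p = 1 + p^(Suc (a+j))*w"
    using one_plus_prime_power_pow_prime[OF p, of "a+j" v] a v(1) by auto
  have "(1 + p^a*u)^(p^Suc j) = ((1 + p^a*u)^(p^j))^p"
    by (simp only: power_Suc2 power_mult)
  also have "\<dots> = 1 + p^(a + Suc j)*w" using v w by simp
  finally show ?case using w(1) by blast
qed

lemma one_plus_cong_one_iff: "[1 + y = 1] (mod n) \<longleftrightarrow> n dvd (y::nat)"
  using cong_add_lcancel_0_nat[of 1 y n] by (simp add: cong_0_iff)

lemma ord_one_plus_prime_power:
  fixes p k m u :: nat
  assumes p: "Factorial_Ring.prime p" "odd p" and k: "k = 0 \<or> k < m" and u: "\<not> p dvd u"
  shows "ord (p^m) (1 + p^(m-k)*u) = p^k"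
proof (cases "k = 0")
  case True
  then show ?thesis using one_plus_cong_one_iff[of "p^m*u" "p^m"] by (simp add: ord_eq_Suc_0_iff)
next
  case False
  with k have "0 < k" "k < m" by auto
  define x where "x = 1 + p^(m-k)*u"
  have pow_x: "\<exists>v. \<not> p dvd v \<and> x^(p^j) = 1 + p^(m-k+j)*v" for j
    unfolding x_def by (rule one_plus_prime_power_pow[OF p _ u]) (use \<open>k < m\<close> in simp)
  obtain v where "x^(p^k) = 1 + p^m*v"
    using pow_x[of k] \<open>k < m\<close> by auto
  hence "[x^(p^k) = 1] (mod p^m)" using one_plus_cong_one_iff[of "p^m*v" "p^m"] by simp
  hence "ord (p^m) x dvd p^k" by (simp add: ord_divides')
  then obtain e where e: "e \<le> k" "ord (p^m) x = p^e"
    using divides_primepow_nat[OF p(1)] by blast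
  have "e = k"
  proof (rule ccontr)
    assume "e \<noteq> k"
    hence "p^e dvd p^(k-1)" using e by (simp add: le_imp_power_dvd)
    hence "[x^(p^(k-1)) = 1] (mod p^m)" using e(2) by (simp add: ord_divides')
    moreover obtain w where w: "\<not> p dvd w" "x^(p^(k-1)) = 1 + p^(m-1)*w"
      using pow_x[of "k-1"] \<open>0 < k\<close> \<open>k < m\<close> by auto
    ultimately have "p^m dvd p^(m-1)*w"
      using \<open>k < m\<close> one_plus_cong_one_iff[of "p^(m-1)*w" "p^m"] by simp
    moreover have "p^m = p^(m-1) * p" using \<open>k < m\<close> by (simp flip: power_Suc2)
    ultimately have "p^(m-1) * p dvd p^(m-1)*w" by simp
    hence "p dvd w" using p(1) by (simp add: prime_gt_0_nat)
    thus False using w(1) by simp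
  qed
  thus ?thesis using e x_def by simp
qed

lemma ord_one_plus_prime_power_pow:
  fixes p m o1 o2 :: nat
  assumes p: "Factorial_Ring.prime p" "odd p" and o1: "o1 = 0 \<or> o1 < m" and le: "o2 \<le> o1"
  shows "ord (p^m) ((1 + p^(m-o1))^(p^(o1-o2))) = p^o2"
proof (cases "o1 = 0")
  case True
  thus ?thesis using le ord_one_plus_prime_power[OF p, of 0 m 1] prime_gt_1_nat[OF p(1)] by simp
next
  case False
  hence "o1 < m" using o1 by simp
  hence "m - o1 \<ge> 1" by simp
  moreover have "\<not> p dvd 1" using prime_gt_1_nat[OF p(1)] by simp
  ultimately obtain v where v: "\<not> p dvd v" "(1 + p^(m-o1)*1)^(p^(o1-o2)) = 1 + p^(m-o1+(o1-o2))*v"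
    using one_plus_prime_power_pow[OF p] by blast
  moreover have "m - o1 + (o1 - o2) = m - o2" using le \<open>o1 < m\<close> by simp
  ultimately show ?thesis using ord_one_plus_prime_power[OF p _ v(1), of o2] le \<open>o1 < m\<close> by auto
qed

lemma ord_prime_power_modulus_exponent:
  fixes p k m s :: nat
  assumes p: "Factorial_Ring.prime p" and ord: "ord (p^m) s = p^k"
  shows "k = 0 \<or> k < m"
proof (cases "m = 0")
  case True
  hence "p^k = 1" using ord by simp
  thus ?thesis using prime_gt_1_nat[OF p] by simp
next
  case False
  have "ord (p^m) s > 0" using ord p by (simp add: prime_gt_0_nat)
  hence "coprime (p^m) s" by simp
  hence "p^k dvd totient (p^m)" unfolding ord[symmetric] by (rule order_divides_totient)
  also have "totient (p^m) = p^(m-1)*(p-1)" using False p by (simp add: totient_prime_power)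
  finally have "p^k dvd p^(m-1)*(p-1)" .
  moreover have "coprime p (p - 1)"
    using prime_gt_1_nat[OF p] by (intro coprime_diff_one_right_nat) simp
  then have "coprime (p^k) (p-1)" by simp
  ultimately have "p^k dvd p^(m-1)" by (simp add: coprime_dvd_mult_left_iff)
  hence "k \<le> m - 1" using p prime_ge_2_nat[of p] by (simp add: dvd_power_iff_le)
  thus ?thesis using False by auto
qed

lemma cong_mult_eq_of_gcd_eq:
  fixes a b N :: nat
  assumes N: "N > 0" and gcd_eq: "gcd a N = gcd b N"
  shows "\<exists>j. coprime j (N div gcd a N) \<and> [a * j = b] (mod N)"
proof -
  define e where "e = gcd a N"
  define d where "d = N div e"
  have "e > 0" using N by (simp add: e_def)
  have N_eq: "N = e * d" by (simp add: d_def e_def)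
  obtain a' where a': "a = e * a'" unfolding e_def using gcd_dvd1 by (rule dvdE)
  obtain b' where b': "b = e * b'" unfolding e_def gcd_eq using gcd_dvd1 by (rule dvdE)
  have "e * gcd a' d = gcd (e * a') (e * d)" by (rule gcd_mult_distrib_nat)
  also have "\<dots> = e" by (simp only: a'[symmetric] N_eq[symmetric] e_def[symmetric])
  finally have "e = e * gcd a' d" by (rule sym)
  hence "gcd a' d = 1 \<or> e = 0" by (rule mult_eq_self_implies_10)
  hence "gcd a' d = 1" using \<open>e > 0\<close> by (elim disjE) simp_all
  have "e * gcd b' d = gcd (e * b') (e * d)" by (rule gcd_mult_distrib_nat)
  also have "\<dots> = gcd b N" by (simp only: b'[symmetric] N_eq[symmetric])
  also have "\<dots> = e" by (simp only: e_def gcd_eq)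
  finally have "e = e * gcd b' d" by (rule sym)
  hence "gcd b' d = 1 \<or> e = 0" by (rule mult_eq_self_implies_10)
  hence "gcd b' d = 1" using \<open>e > 0\<close> by (elim disjE) simp_all
  obtain i where i: "[a' * i = Suc 0] (mod d)"
    using cong_solve_coprime_nat[of a' d] \<open>gcd a' d = 1\<close> unfolding coprime_iff_gcd_eq_1 by blast
  have "coprime (a' * i) d" by (rule cong_imp_coprime[OF cong_sym[OF i]]) simp
  hence "coprime (i * b') d" using \<open>gcd b' d = 1\<close> unfolding coprime_iff_gcd_eq_1[symmetric] by simp
  have "[a' * i * b' = Suc 0 * b'] (mod d)" using i by (rule cong_scalar_right)
  hence "(e * (a' * i * b')) mod (e * d) = (e * b') mod (e * d)" by (simp add: cong_def mod_mult_mult1)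
  hence "[a * (i * b') = b] (mod N)" unfolding cong_def a' b' N_eq by (simp add: mult.assoc)
  moreover have "coprime (i * b') (N div gcd a N)" using \<open>coprime (i * b') d\<close> unfolding d_def e_def .
  ultimately show ?thesis by blast
qed

lemma residue_primroot_power_eq:
  fixes n g s :: nat
  assumes "n > 1" and g: "residue_primroot n g" and s: "coprime n s"
  obtains a where "[s = g^a] (mod n)"
proof -
  have "s mod n \<noteq> 0"
  proof
    assume "s mod n = 0"
    hence "is_unit n" using coprime_common_divisor[OF s dvd_refl] by auto
    thus False using assms(1) by simp
  qed
  hence "s mod n \<in> totatives n"
    using s assms(1) by (simp add: in_totatives_iff coprime_commute less_imp_le)
  hence "s mod n \<in> (\<lambda>i. g^i mod n) ` {..<totient n}"
    using residue_primroot_is_generator[OF assms(1) g] by (simp add: bij_betw_def)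
  thus ?thesis using that by (auto simp: cong_def)
qed

lemma residue_primroot_ord_eq_imp_power_cong:
  fixes n g s r :: nat
  assumes g: "residue_primroot n g" and s: "coprime n s" and r: "coprime n r"
    and ord_eq: "ord n s = ord n r"
  shows "\<exists>j. coprime j (ord n s) \<and> [s^j = r] (mod n)"
proof (cases "n = 1")
  case True
  thus ?thesis by (intro exI[of _ 1]) simp
next
  case False
  hence "n > 1" using g by (cases n) auto
  define N where "N = ord n g"
  have "coprime n g" "N = totient n" using g by (simp_all add: residue_primroot_def N_def)
  hence "N > 0" using \<open>n > 1\<close> by simp
  obtain a where a: "[s = g^a] (mod n)" using residue_primroot_power_eq[OF \<open>n > 1\<close> g s] .
  obtain b where b: "[r = g^b] (mod n)" using residue_primroot_power_eq[OF \<open>n > 1\<close> g r] .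
  have ord_s: "ord n s = N div gcd a N" and ord_r: "ord n r = N div gcd b N"
    using ord_cong[OF a] ord_cong[OF b] ord_power[OF \<open>coprime n g\<close>] by (simp_all add: N_def gcd.commute)
  have d: "N div gcd a N = N div gcd b N" using ord_eq unfolding ord_s ord_r .
  have "gcd a N * (N div gcd a N) = N" by simp
  also have "\<dots> = gcd b N * (N div gcd b N)" by simp
  finally have "gcd a N * (N div gcd a N) = gcd b N * (N div gcd a N)" by (simp only: d)
  moreover have "N div gcd a N \<noteq> 0" using \<open>N > 0\<close> by (simp add: div_eq_0_iff gcd_le2_nat not_less)
  ultimately have "gcd a N = gcd b N" using mult_right_cancel by blast
  then obtain j where j: "coprime j (N div gcd a N)" "[a * j = b] (mod N)"
    using cong_mult_eq_of_gcd_eq[OF \<open>N > 0\<close>] by blast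
  have "[s^j = (g^a)^j] (mod n)" using a by (rule cong_pow)
  also have "(g^a)^j = g^(a * j)" by (simp add: power_mult)
  also have "[g^(a * j) = g^b] (mod n)"
    using j(2) order_divides_expdiff[OF \<open>coprime n g\<close>] by (simp add: N_def)
  also have "[g^b = r] (mod n)" using b by (rule cong_sym)
  finally show ?thesis using j(1) ord_s by auto
qed

lemma prime_power_ord_eq_imp_power_cong:
  fixes p m s r :: nat
  assumes p: "Factorial_Ring.prime p" "odd p" and ord_eq: "ord (p^m) s = ord (p^m) r" "ord (p^m) s = p^k"
  shows "\<exists>j. coprime j p \<and> [s^j = r] (mod p^m)"
proof (cases "k = 0")
  case True
  hence "ord (p^m) s = Suc 0" "ord (p^m) r = Suc 0" using ord_eq by simp_all
  hence "[s = 1] (mod p^m)" "[r = 1] (mod p^m)" by (simp_all add: ord_eq_Suc_0_iff)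
  hence "[s^1 = r] (mod p^m)" by (metis cong_sym cong_trans power_one_right)
  thus ?thesis by (intro exI[of _ 1]) auto
next
  case False
  have "p^k > 0" using p(1) by (simp add: prime_gt_0_nat)
  hence "0 < ord (p^m) s" "0 < ord (p^m) r" unfolding ord_eq(1)[symmetric] ord_eq(2) by simp_all
  hence "coprime (p^m) s" "coprime (p^m) r" using ord_gt_0_iff by blast+
  moreover have "m > 0"
  proof (rule ccontr)
    assume "\<not> m > 0"
    hence "p^k = 1" using ord_eq(2) by simp
    thus False using False prime_gt_1_nat[OF p(1)] by simp
  qed
  moreover obtain g where "\<forall>k>0. residue_primroot (p^k) g"
    using residue_primroot_odd_prime_power_exists[OF p] by blast
  ultimately obtain j where "coprime j (ord (p^m) s)" "[s^j = r] (mod p^m)"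
    using residue_primroot_ord_eq_imp_power_cong[OF _ _ _ ord_eq(1)] by blast
  thus ?thesis using False ord_eq(2) by auto
qed

lemma (in group) pow_eq_iff_cong:
  assumes x: "x \<in> carrier G"
  shows "x [^] (a::nat) = x [^] (b::nat) \<longleftrightarrow> [a = b] (mod ord x)"
proof -
  have "x [^] a = x [^] b \<longleftrightarrow> x [^] (int a) = x [^] (int b)"
    by (simp add: int_pow_int)
  also have "\<dots> \<longleftrightarrow> int (ord x) dvd (int b - int a)" using int_pow_eq[OF x] by simp
  also have "\<dots> \<longleftrightarrow> [int b = int a] (mod int (ord x))" by (simp add: cong_iff_dvd_diff)
  also have "\<dots> \<longleftrightarrow> [a = b] (mod ord x)" by (simp add: cong_int_iff cong_sym_eq)
  finally show ?thesis .
qed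

lemma (in group) mult_inv_cancel_left [simp]:
  "g \<in> carrier G \<Longrightarrow> z \<in> carrier G \<Longrightarrow> g \<otimes> (inv g \<otimes> z) = z"
  by (simp add: m_assoc[symmetric])

lemma (in group) inv_mult_cancel_left [simp]:
  "g \<in> carrier G \<Longrightarrow> z \<in> carrier G \<Longrightarrow> inv g \<otimes> (g \<otimes> z) = z"
  by (simp add: m_assoc[symmetric])

lemma (in group) conj_nat_pow:
  assumes g: "g \<in> carrier G" and x: "x \<in> carrier G"
  shows "(inv g \<otimes> x \<otimes> g) [^] (k::nat) = inv g \<otimes> x [^] k \<otimes> g"
proof (induction k)
  case 0
  then show ?case using g by simp
next
  case (Suc k)
  have "(inv g \<otimes> x \<otimes> g) [^] Suc k = (inv g \<otimes> x [^] k \<otimes> g) \<otimes> (inv g \<otimes> x \<otimes> g)"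
    using Suc by simp
  also have "\<dots> = inv g \<otimes> (x [^] k \<otimes> x) \<otimes> g"
    using g x by (simp add: m_assoc)
  finally show ?case by simp
qed

lemma (in group) conj_mult:
  assumes "g \<in> carrier G" "h \<in> carrier G" "x \<in> carrier G"
  shows "inv (g \<otimes> h) \<otimes> x \<otimes> (g \<otimes> h) = inv h \<otimes> (inv g \<otimes> x \<otimes> g) \<otimes> h"
  using assms by (simp add: inv_mult_group m_assoc)

lemma (in group) conj_eq_iff_commute:
  assumes g: "g \<in> carrier G" and x: "x \<in> carrier G"
  shows "inv g \<otimes> x \<otimes> g = x \<longleftrightarrow> g \<otimes> x = x \<otimes> g"
proof
  assume "inv g \<otimes> x \<otimes> g = x"
  hence "g \<otimes> (inv g \<otimes> x \<otimes> g) = g \<otimes> x" by simp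
  thus "g \<otimes> x = x \<otimes> g" using g x by (simp add: m_assoc)
next
  assume "g \<otimes> x = x \<otimes> g"
  hence "inv g \<otimes> (g \<otimes> x) = inv g \<otimes> (x \<otimes> g)" by simp
  thus "inv g \<otimes> x \<otimes> g = x" using g x by (simp add: m_assoc)
qed

lemma (in group) ord_conj:
  assumes g: "g \<in> carrier G" and x: "x \<in> carrier G"
  shows "ord (inv g \<otimes> x \<otimes> g) = ord x"
proof -
  have "inv g \<otimes> y \<otimes> g = \<one> \<longleftrightarrow> y = \<one>" if y: "y \<in> carrier G" for y
  proof
    assume "inv g \<otimes> y \<otimes> g = \<one>"
    hence "g \<otimes> (inv g \<otimes> y \<otimes> g) \<otimes> inv g = g \<otimes> \<one> \<otimes> inv g" by simp
    thus "y = \<one>" using g y by (simp add: m_assoc)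
  qed (use g in simp)
  hence "inv g \<otimes> x [^] k \<otimes> g = \<one> \<longleftrightarrow> x [^] k = \<one>" for k :: nat using x by simp
  thus ?thesis using g x by (simp add: ord_unique pow_eq_id conj_nat_pow)
qed

lemma (in group) centralizer_iff_conj:
  assumes "H \<subseteq> carrier G"
  shows "g \<in> centralizer G H \<longleftrightarrow> g \<in> carrier G \<and> (\<forall>h\<in>H. inv g \<otimes> h \<otimes> g = h)"
  using assms conj_eq_iff_commute by (auto simp: centralizer_def)

lemma (in group) subgroup_centralizer:
  assumes H: "H \<subseteq> carrier G"
  shows "subgroup (centralizer G H) G"
proof (rule subgroupI)
  show "centralizer G H \<subseteq> carrier G" by (auto simp: centralizer_def)
  have "\<one> \<in> centralizer G H" using H by (auto simp: centralizer_iff_conj)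
  thus "centralizer G H \<noteq> {}" by blast
next
  fix g assume g: "g \<in> centralizer G H"
  have "inv (inv g) \<otimes> h \<otimes> inv g = h" if "h \<in> H" for h
  proof -
    have gh: "g \<in> carrier G" "h \<in> carrier G" using g that H by (auto simp: centralizer_iff_conj)
    have "inv (inv g) \<otimes> h \<otimes> inv g = g \<otimes> (inv g \<otimes> h \<otimes> g) \<otimes> inv g"
      using g that H by (simp add: centralizer_iff_conj)
    also have "\<dots> = h" using gh by (simp add: m_assoc)
    finally show ?thesis .
  qed
  thus "inv g \<in> centralizer G H" using g H by (simp add: centralizer_iff_conj)
next
  fix g k assume "g \<in> centralizer G H" and "k \<in> centralizer G H"
  thus "g \<otimes> k \<in> centralizer G H"
    using H by (auto simp: centralizer_iff_conj conj_mult subset_iff)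
qed

lemma (in group) centralizer_normal:
  assumes "H \<lhd> G"
  shows "centralizer G H \<lhd> G"
proof -
  interpret H: normal H G by (rule assms)
  note C_iff = centralizer_iff_conj[OF H.subset]
  have "x \<otimes> g \<otimes> inv x \<in> centralizer G H"
    if x: "x \<in> carrier G" and g: "g \<in> centralizer G H" for x g
  proof -
    have gc: "g \<in> carrier G" using g by (simp add: C_iff)
    have "inv (x \<otimes> g \<otimes> inv x) \<otimes> h \<otimes> (x \<otimes> g \<otimes> inv x) = h" if h: "h \<in> H" for h
    proof -
      have hc: "h \<in> carrier G" using h H.subset by auto
      have "inv x \<otimes> h \<otimes> x \<in> H" using H.inv_op_closed1[OF x h] .
      hence "inv g \<otimes> (inv x \<otimes> h \<otimes> x) \<otimes> g = inv x \<otimes> h \<otimes> x" using g by (simp add: C_iff)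
      moreover have "inv (x \<otimes> g \<otimes> inv x) \<otimes> h \<otimes> (x \<otimes> g \<otimes> inv x)
          = x \<otimes> (inv g \<otimes> (inv x \<otimes> h \<otimes> x) \<otimes> g) \<otimes> inv x"
        using x gc hc by (simp add: inv_mult_group m_assoc)
      ultimately show ?thesis using x hc by (simp add: m_assoc)
    qed
    thus ?thesis using x gc by (simp add: C_iff)
  qed
  thus ?thesis using subgroup_centralizer[OF H.subset] by (simp add: normal_inv_iff)
qed

lemma (in group) coset_ord_dvd_iff:
  assumes N: "N \<lhd> G" and g: "g \<in> carrier G"
  shows "coset_ord G N g dvd k \<longleftrightarrow> g [^] (k::nat) \<in> N"
proof -
  interpret N: normal N G by (rule N)
  interpret Q: group "G Mod N" by (rule N.factorgroup_is_group)
  have "N #> g \<in> carrier (G Mod N)" using g N.subset by (simp add: FactGroup_def rcosetsI)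
  hence "coset_ord G N g dvd k \<longleftrightarrow> (N #> g) [^]\<^bsub>G Mod N\<^esub> k = \<one>\<^bsub>G Mod N\<^esub>"
    unfolding coset_ord_def using Q.pow_eq_id by simp
  also have "\<dots> \<longleftrightarrow> N #> (g [^] k) = N" using N.FactGroup_pow[OF g, of k] by simp
  also have "\<dots> \<longleftrightarrow> g [^] k \<in> N"
    using coset_join1[of N "g [^] k"] coset_join2[of "g [^] k" N] g N.subgroup_axioms by auto
  finally show ?thesis .
qed

lemma (in group) coset_ord_dvd_order:
  assumes N: "N \<lhd> G" and g: "g \<in> carrier G" and fin: "finite (carrier G)"
  shows "coset_ord G N g dvd order G"
proof -
  interpret N: normal N G by (rule N)
  interpret Q: group "G Mod N" by (rule N.factorgroup_is_group)
  have "coset_ord G N g dvd order (G Mod N)"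
    unfolding coset_ord_def using g N.subset
    by (intro Q.ord_dvd_group_order) (simp add: FactGroup_def rcosetsI)
  also have "order (G Mod N) dvd order G"
    using lagrange[OF N.subgroup_axioms] fin unfolding order_def FactGroup_def
    by (metis dvd_triv_left partial_object.simps(1))
  finally show ?thesis .
qed

lemma (in group) generate_pow_coprime:
  assumes fin: "finite (carrier G)" and x: "x \<in> carrier G" and j: "coprime j (ord x)"
  shows "generate G {x [^] (j::nat)} = generate G {x}"
proof -
  obtain i where "[j * i = Suc 0] (mod ord x)" using cong_solve_coprime_nat[OF j] by auto
  hence "x [^] (j * i) = x [^] (Suc 0)" using pow_eq_iff_cong[OF x] by blast
  hence "(x [^] j) [^] i = x" using x by (simp add: nat_pow_pow)
  hence "x \<in> {(x [^] j) [^] k | k. k \<in> (UNIV :: nat set)}" by (intro CollectI exI[of _ i]) simp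
  hence "x \<in> generate G {x [^] j}" using x generate_pow_on_finite_carrier[OF fin, of "x [^] j"] by simp
  moreover have "x [^] j \<in> generate G {x}" using x generate_pow_on_finite_carrier[OF fin x] by auto
  ultimately show ?thesis using x
    by (intro equalityI generate_subgroup_incl generate_is_subgroup) auto
qed

lemma (in group) generate_insert_pow_coprime:
  assumes fin: "finite (carrier G)" and x: "x \<in> carrier G" and y: "y \<in> carrier G"
    and j: "coprime j (ord x)"
  shows "generate G {x [^] (j::nat), y} = generate G {x, y}"
proof -
  have "x [^] j \<in> generate G {x}" "x \<in> generate G {x [^] j}"
    using generate_pow_coprime[OF fin x j] by (auto intro: generate.incl)
  moreover have "generate G {x} \<subseteq> generate G {x, y}" "generate G {x [^] j} \<subseteq> generate G {x [^] j, y}"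
    by (simp_all add: mono_generate)
  moreover have "y \<in> generate G {x, y}" "y \<in> generate G {x [^] j, y}"
    by (auto intro: generate.incl)
  ultimately show ?thesis using x y
    by (intro equalityI generate_subgroup_incl generate_is_subgroup) auto
qed

lemma DirProd_nat_pow: "(x, y) [^]\<^bsub>G \<times>\<times> H\<^esub> (k::nat) = (x [^]\<^bsub>G\<^esub> k, y [^]\<^bsub>H\<^esub> k)"
  by (induction k) simp_all

lemma integer_mod_group_DirProd_ord:
  fixes N1 N2 :: nat
  assumes "N1 > 1" and "N2 > 1"
  defines "P \<equiv> integer_mod_group N1 \<times>\<times> integer_mod_group N2"
  shows "group.ord P (1, 0) = N1" and "group.ord P (0, 1) = N2"
proof -
  interpret P: group P unfolding P_def by (intro DirProd_group) auto
  have "(1, 0) \<in> carrier P" "(0, 1) \<in> carrier P"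
    using assms by (simp_all add: P_def carrier_integer_mod_group)
  moreover have "(1, 0) [^]\<^bsub>P\<^esub> k = \<one>\<^bsub>P\<^esub> \<longleftrightarrow> N1 dvd k" "(0, 1) [^]\<^bsub>P\<^esub> k = \<one>\<^bsub>P\<^esub> \<longleftrightarrow> N2 dvd k"
    for k :: nat
    by (simp_all add: P_def DirProd_nat_pow mod_eq_0_iff_dvd)
  ultimately show "P.ord (1, 0) = N1" "P.ord (0, 1) = N2" using P.ord_unique by simp_all
qed

lemma integer_mod_group_DirProd_generate:
  fixes N1 N2 :: nat
  assumes N1: "N1 > 1" and N2: "N2 > 1"
  defines "P \<equiv> integer_mod_group N1 \<times>\<times> integer_mod_group N2"
  shows "generate P {(1, 0), (0, 1)} = carrier P"
    and "generate P {(1, 0)} \<inter> generate P {(0, 1)} = {\<one>\<^bsub>P\<^esub>}"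
proof -
  interpret P: group P unfolding P_def by (intro DirProd_group) auto
  have carrier_P: "carrier P = {0..<int N1} \<times> {0..<int N2}"
    using N1 N2 by (simp add: P_def carrier_integer_mod_group)
  have pow: "(x, y) [^]\<^bsub>P\<^esub> (k::nat) = ((int k * x) mod int N1, (int k * y) mod int N2)" for x y k
    by (simp add: P_def DirProd_nat_pow)
  have e1: "(1, 0) \<in> carrier P" and e2: "(0, 1) \<in> carrier P" using N1 N2 carrier_P by auto
  have fin: "finite (carrier P)" using carrier_P by simp
  have gen1: "generate P {(1, 0)} = {(1, 0) [^]\<^bsub>P\<^esub> k | k. k \<in> (UNIV :: nat set)}"
    and gen2: "generate P {(0, 1)} = {(0, 1) [^]\<^bsub>P\<^esub> k | k. k \<in> (UNIV :: nat set)}"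
    using P.generate_pow_on_finite_carrier[OF fin] e1 e2 by simp_all
  show "generate P {(1, 0), (0, 1)} = carrier P"
  proof
    show "generate P {(1, 0), (0, 1)} \<subseteq> carrier P" using e1 e2 by (intro P.generate_incl) auto
    have "(a, b) \<in> generate P {(1, 0), (0, 1)}" if "(a, b) \<in> carrier P" for a b
    proof -
      have "(1, 0) [^]\<^bsub>P\<^esub> nat a \<in> generate P {(1, 0), (0, 1)}"
        "(0, 1) [^]\<^bsub>P\<^esub> nat b \<in> generate P {(1, 0), (0, 1)}"
        using gen1 gen2 P.mono_generate[of "{(1, 0)}" "{(1, 0), (0, 1)}"]
          P.mono_generate[of "{(0, 1)}" "{(1, 0), (0, 1)}"] by blast+
      hence "(1, 0) [^]\<^bsub>P\<^esub> nat a \<otimes>\<^bsub>P\<^esub> (0, 1) [^]\<^bsub>P\<^esub> nat b \<in> generate P {(1, 0), (0, 1)}"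
        using e1 e2 by (intro subgroup.m_closed P.generate_is_subgroup) auto
      moreover have "(1, 0) [^]\<^bsub>P\<^esub> nat a \<otimes>\<^bsub>P\<^esub> (0, 1) [^]\<^bsub>P\<^esub> nat b = (a, b)"
        using that carrier_P by (simp add: pow) (simp add: P_def)
      ultimately show ?thesis by simp
    qed
    thus "carrier P \<subseteq> generate P {(1, 0), (0, 1)}" by auto
  qed
  have one_P: "\<one>\<^bsub>P\<^esub> = (0, 0)" by (simp add: P_def)
  have "x = \<one>\<^bsub>P\<^esub>" if "x \<in> generate P {(1, 0)}" "x \<in> generate P {(0, 1)}" for x
    using that unfolding gen1 gen2 one_P by (auto simp: pow)
  thus "generate P {(1, 0)} \<inter> generate P {(0, 1)} = {\<one>\<^bsub>P\<^esub>}"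
    using generate.one[of P "{(1, 0)}"] generate.one[of P "{(0, 1)}"] by blast
qed

lemma iso_ord_eq:
  assumes "group G" "group H" and h: "h \<in> iso G H" and x: "x \<in> carrier G"
  shows "group.ord H (h x) = group.ord G x"
proof -
  interpret G: group G by fact
  interpret H: group H by fact
  interpret h: group_hom G H h using assms by (simp add: group_hom_def group_hom_axioms_def iso_def)
  have "h x [^]\<^bsub>H\<^esub> k = \<one>\<^bsub>H\<^esub> \<longleftrightarrow> x [^]\<^bsub>G\<^esub> k = \<one>\<^bsub>G\<^esub>" for k :: nat
    using h x iso_iff[of h G H] by (metis G.nat_pow_closed G.one_closed h.hom_nat_pow h.hom_one inj_onD)
  thus ?thesis using x by (simp add: H.ord_unique G.pow_eq_id)
qed

lemma is_basis_swap: "is_basis G p n1 n2 b1 b2 \<longleftrightarrow> is_basis G p n2 n1 b2 b1"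
  by (auto simp: is_basis_def Let_def insert_commute Int_commute)

lemma (in group) is_basis_pow_left:
  assumes fin: "finite (carrier G)" and b: "is_basis G p n1 n2 b1 b2" and j: "coprime j p"
  shows "is_basis G p n1 n2 (b1 [^] (j::nat)) b2"
proof -
  let ?H = "commutator_sub G"
  interpret H: normal ?H G by (rule derived_self_is_normal)
  interpret Q: group "G Mod ?H" by (rule H.factorgroup_is_group)
  have b1: "b1 \<in> carrier G" and b2: "b2 \<in> carrier G"
    and gen: "generate (G Mod ?H) {?H #> b1, ?H #> b2} = carrier (G Mod ?H)"
    and int: "generate (G Mod ?H) {?H #> b1} \<inter> generate (G Mod ?H) {?H #> b2} = {\<one>\<^bsub>G Mod ?H\<^esub>}"
    and o1: "coset_ord G ?H b1 = p^n1"
    using b unfolding is_basis_def Let_def by auto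
  have fin_Q: "finite (carrier (G Mod ?H))" using fin by (simp add: carrier_FactGroup)
  have c1: "?H #> b1 \<in> carrier (G Mod ?H)" and c2: "?H #> b2 \<in> carrier (G Mod ?H)"
    using b1 b2 by (simp_all add: carrier_FactGroup)
  have jc: "coprime j (Q.ord (?H #> b1))" using o1 j unfolding coset_ord_def by simp
  have pow: "?H #> (b1 [^] j) = (?H #> b1) [^]\<^bsub>G Mod ?H\<^esub> j" using H.FactGroup_pow b1 by simp
  have "coset_ord G ?H (b1 [^] j) = p^n1"
    using Q.pow_ord_eq_ord_iff[OF fin_Q c1] jc pow o1 unfolding coset_ord_def by simp
  thus ?thesis
    using b gen int pow Q.generate_insert_pow_coprime[OF fin_Q c1 c2 jc] Q.generate_pow_coprime[OF fin_Q c1 jc]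
    unfolding is_basis_def Let_def by simp
qed

lemma (in group) is_basis_pow:
  assumes "finite (carrier G)" and "is_basis G p n1 n2 b1 b2" and "coprime j1 p" and "coprime j2 p"
  shows "is_basis G p n1 n2 (b1 [^] (j1::nat)) (b2 [^] (j2::nat))"
  using assms is_basis_pow_left is_basis_swap by metis

lemma (in group) bases_nonempty:
  assumes p: "p > 1" and n: "n1 \<ge> 1" "n2 \<ge> 1"
    and iso: "G Mod commutator_sub G \<cong> integer_mod_group (p ^ n1) \<times>\<times> integer_mod_group (p ^ n2)"
  shows "bases G p n1 n2 \<noteq> {}"
proof -
  let ?H = "commutator_sub G"
  define Q where "Q = G Mod ?H"
  define P where "P = integer_mod_group (p ^ n1) \<times>\<times> integer_mod_group (p ^ n2)"
  interpret H: normal ?H G by (rule derived_self_is_normal)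
  interpret Q: group Q unfolding Q_def by (rule H.factorgroup_is_group)
  interpret P: group P unfolding P_def by (intro DirProd_group) auto
  have N: "p ^ n1 > 1" "p ^ n2 > 1" using one_less_power[OF p] n by auto
  from iso obtain \<phi> where "\<phi> \<in> iso Q P" unfolding is_iso_def Q_def P_def by auto
  define \<psi> where "\<psi> = inv_into (carrier Q) \<phi>"
  have \<psi>: "\<psi> \<in> iso P Q" unfolding \<psi>_def by (rule Q.iso_set_sym) fact
  interpret \<psi>: group_hom P Q \<psi> using \<psi> by (simp add: group_hom_def group_hom_axioms_def iso_def)
  have inj: "inj_on \<psi> (carrier P)" and surj: "\<psi> ` carrier P = carrier Q"
    using \<psi> by (auto simp: iso_def bij_betw_def)
  note ords = integer_mod_group_DirProd_ord[OF N, folded P_def]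
  note gens = integer_mod_group_DirProd_generate[OF N, folded P_def]
  have "int 1 < int (p ^ n1)" "int 1 < int (p ^ n2)" using N by (simp_all only: of_nat_less_iff)
  hence e: "(1, 0) \<in> carrier P" "(0, 1) \<in> carrier P" by (auto simp: P_def carrier_integer_mod_group)
  obtain b1 b2 where b: "b1 \<in> carrier G" "b2 \<in> carrier G"
    and c: "\<psi> (1, 0) = ?H #> b1" "\<psi> (0, 1) = ?H #> b2"
    using e \<psi>.hom_closed by (simp add: Q_def carrier_FactGroup) (meson imageE)
  have "generate Q {?H #> b1, ?H #> b2} = carrier Q"
    using \<psi>.generate_img[of "{(1, 0), (0, 1)}"] e gens(1) surj by (simp add: c)
  moreover have "generate Q {?H #> b1} \<inter> generate Q {?H #> b2} = {\<one>\<^bsub>Q\<^esub>}"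
  proof -
    have "generate Q {?H #> b1} \<inter> generate Q {?H #> b2} = \<psi> ` (generate P {(1, 0)} \<inter> generate P {(0, 1)})"
      using \<psi>.generate_img[of "{(1, 0)}"] \<psi>.generate_img[of "{(0, 1)}"] e
        inj_on_image_Int[OF inj P.generate_incl P.generate_incl] by (simp add: c)
    thus ?thesis using gens(2) by simp
  qed
  moreover have "Q.ord (\<psi> (1, 0)) = p ^ n1" "Q.ord (\<psi> (0, 1)) = p ^ n2"
    using iso_ord_eq[OF P.is_group Q.is_group \<psi>] e ords by simp_all
  hence "coset_ord G ?H b1 = p ^ n1" "coset_ord G ?H b2 = p ^ n2"
    unfolding coset_ord_def Q_def[symmetric] c by simp_all
  ultimately show ?thesis using b by (auto simp: bases_def is_basis_def Let_def Q_def)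
qed

definition acts_as_power :: "('a, 'b) monoid_scheme \<Rightarrow> 'a \<Rightarrow> nat \<Rightarrow> bool" where
  "acts_as_power G g s \<longleftrightarrow> (\<forall>x \<in> commutator_sub G. inv\<^bsub>G\<^esub> g \<otimes>\<^bsub>G\<^esub> x \<otimes>\<^bsub>G\<^esub> g = x [^]\<^bsub>G\<^esub> s)"

locale cyclic_commutator_p_group = group G for G (structure) +
  fixes p m c
  assumes prime_p: "Factorial_Ring.prime p" and odd_p: "odd p"
    and finite_carrier: "finite (carrier G)" and card_carrier: "\<exists>k. card (carrier G) = p ^ k"
    and c_commutator: "c \<in> commutator_sub G" and generate_c: "generate G {c} = commutator_sub G"
    and card_commutator: "card (commutator_sub G) = p ^ m"
begin

abbreviation "G' \<equiv> commutator_sub G"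

abbreviation "C \<equiv> centralizer G G'"

lemma p_gt_1: "p > 1"
  using prime_p by (rule prime_gt_1_nat)

lemma commutator_normal: "G' \<lhd> G"
  by (rule derived_self_is_normal)

lemma commutator_subset: "G' \<subseteq> carrier G"
  using commutator_normal by (simp add: normal_def subgroup.subset)

lemma c_carrier: "c \<in> carrier G"
  using c_commutator commutator_subset by auto

lemma ord_c: "ord c = p ^ m"
  using generate_pow_card[OF c_carrier] generate_c card_commutator by simp

lemma commutator_eq_powers: "G' = {c [^] k | k. k \<in> (UNIV :: nat set)}"
  using generate_pow_on_finite_carrier[OF finite_carrier c_carrier] generate_c by simp

lemma pow_commutator_cong:
  assumes x: "x \<in> G'" and ab: "[a = b] (mod p ^ m)"
  shows "x [^] (a::nat) = x [^] (b::nat)"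
proof -
  obtain k :: nat where k: "x = c [^] k" using x commutator_eq_powers by auto
  have "[k * a = k * b] (mod p ^ m)" using ab by (rule cong_scalar_left)
  hence "c [^] (k * a) = c [^] (k * b)" using pow_eq_iff_cong[OF c_carrier] ord_c by simp
  thus ?thesis using k c_carrier by (simp add: nat_pow_pow)
qed

lemma acts_as_power_exists:
  assumes g: "g \<in> carrier G"
  obtains s where "acts_as_power G g s" and "coprime (p ^ m) s"
proof -
  have "inv g \<otimes> c \<otimes> g \<in> G'" using normal.inv_op_closed1[OF commutator_normal g c_commutator] .
  then obtain s :: nat where s: "inv g \<otimes> c \<otimes> g = c [^] s" using commutator_eq_powers by auto
  have "acts_as_power G g s" unfolding acts_as_power_def
  proof
    fix x assume "x \<in> G'"
    then obtain k :: nat where k: "x = c [^] k" using commutator_eq_powers by auto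
    have "inv g \<otimes> x \<otimes> g = (inv g \<otimes> c \<otimes> g) [^] k" using g c_carrier by (simp add: k conj_nat_pow)
    thus "inv g \<otimes> x \<otimes> g = x [^] s" using c_carrier by (simp add: s k nat_pow_pow mult.commute)
  qed
  moreover have "ord (c [^] s) = ord c" using ord_conj[OF g c_carrier] s by simp
  hence "coprime (p ^ m) s"
    using pow_ord_eq_ord_iff[OF finite_carrier c_carrier] ord_c by (simp add: coprime_commute)
  ultimately show ?thesis using that by blast
qed

lemma acts_as_power_iff_cong:
  assumes s: "acts_as_power G g s"
  shows "acts_as_power G g t \<longleftrightarrow> [s = t] (mod p ^ m)"
proof
  assume "acts_as_power G g t"
  hence "inv g \<otimes> c \<otimes> g = c [^] s" "inv g \<otimes> c \<otimes> g = c [^] t"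
    using s c_commutator unfolding acts_as_power_def by blast+
  hence "c [^] s = c [^] t" by simp
  thus "[s = t] (mod p ^ m)" using pow_eq_iff_cong[OF c_carrier] ord_c by simp
next
  assume st: "[s = t] (mod p ^ m)"
  show "acts_as_power G g t" unfolding acts_as_power_def
  proof
    fix x assume x: "x \<in> G'"
    have "inv g \<otimes> x \<otimes> g = x [^] s" using s x by (simp add: acts_as_power_def)
    also have "\<dots> = x [^] t" by (rule pow_commutator_cong[OF x st])
    finally show "inv g \<otimes> x \<otimes> g = x [^] t" .
  qed
qed

lemma acts_as_power_nat_pow:
  assumes g: "g \<in> carrier G" and s: "acts_as_power G g s"
  shows "acts_as_power G (g [^] k) (s ^ k)"
proof (induction k)
  case 0
  then show ?case using commutator_subset by (auto simp: acts_as_power_def)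
next
  case (Suc k)
  show ?case unfolding acts_as_power_def
  proof
    fix x assume x: "x \<in> G'"
    have xc: "x \<in> carrier G" using x commutator_subset by auto
    have "x [^] (s ^ k) \<in> G'" using x commutator_eq_powers c_carrier by (auto simp: nat_pow_pow)
    have "inv (g [^] Suc k) \<otimes> x \<otimes> g [^] Suc k = inv g \<otimes> (inv (g [^] k) \<otimes> x \<otimes> g [^] k) \<otimes> g"
      using conj_mult[of "g [^] k" g x] g xc by simp
    also have "\<dots> = inv g \<otimes> x [^] (s ^ k) \<otimes> g" using Suc x by (simp add: acts_as_power_def)
    also have "\<dots> = (x [^] (s ^ k)) [^] s" using s \<open>x [^] (s ^ k) \<in> G'\<close> by (simp add: acts_as_power_def)
    also have "\<dots> = x [^] (s ^ Suc k)" using xc by (simp add: nat_pow_pow mult.commute)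
    finally show "inv (g [^] Suc k) \<otimes> x \<otimes> g [^] Suc k = x [^] (s ^ Suc k)" .
  qed
qed

lemma centralizer_iff_acts_as_power_1:
  assumes "g \<in> carrier G"
  shows "g \<in> C \<longleftrightarrow> acts_as_power G g 1"
proof -
  have "inv g \<otimes> x \<otimes> g = x [^] (1::nat) \<longleftrightarrow> g \<otimes> x = x \<otimes> g" if "x \<in> G'" for x
    using that commutator_subset conj_eq_iff_commute[OF assms] by auto
  thus ?thesis using assms unfolding centralizer_def acts_as_power_def by blast
qed

lemma coset_ord_centralizer:
  assumes g: "g \<in> carrier G" and s: "acts_as_power G g s"
  shows "coset_ord G C g = Pocklington.ord (p ^ m) s"
proof -
  have "coset_ord G C g dvd k \<longleftrightarrow> Pocklington.ord (p ^ m) s dvd k" for k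
  proof -
    have "coset_ord G C g dvd k \<longleftrightarrow> acts_as_power G (g [^] k) 1"
      using coset_ord_dvd_iff[OF centralizer_normal[OF commutator_normal] g]
        centralizer_iff_acts_as_power_1 g by simp
    also have "\<dots> \<longleftrightarrow> [s ^ k = 1] (mod p ^ m)"
      using acts_as_power_iff_cong[OF acts_as_power_nat_pow[OF g s]] by simp
    finally show ?thesis by (simp add: ord_divides')
  qed
  thus ?thesis by (meson dvd_antisym dvd_refl)
qed

lemma dvd_order_p_powerE:
  assumes "d dvd order G"
  obtains e where "d = p ^ e"
  using assms card_carrier divides_primepow_nat[OF prime_p] by (auto simp: order_def)

lemma coset_ord_centralizer_eq_o_exp:
  assumes g: "g \<in> carrier G"
  shows "coset_ord G C g = p ^ o_exp G p g"
proof -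
  obtain e where e: "coset_ord G C g = p ^ e"
    using dvd_order_p_powerE coset_ord_dvd_order[OF centralizer_normal[OF commutator_normal] g finite_carrier] .
  have "o_exp G p g = e" unfolding o_exp_def e by (rule the_equality) (use p_gt_1 in auto)
  thus ?thesis using e by simp
qed

lemma ord_eq_o'_exp:
  assumes g: "g \<in> carrier G" and n: "coset_ord G G' g = p ^ n"
  shows "ord g = p ^ (n + o'_exp G p n g)"
proof -
  obtain e where e: "ord g = p ^ e" using dvd_order_p_powerE ord_dvd_group_order[OF g] .
  have "coset_ord G G' g dvd ord g"
    using coset_ord_dvd_iff[OF commutator_normal g] g normal.axioms(1)[OF commutator_normal]
    by (simp add: subgroup.one_closed)
  hence "n \<le> e" using n e p_gt_1 by (simp add: dvd_power_iff_le)
  hence "o'_exp G p n g = e - n" unfolding o'_exp_def e by (intro the_equality) (use p_gt_1 in auto)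
  thus ?thesis using e \<open>n \<le> e\<close> by simp
qed

lemma o_exp_eq_if_acts_as_power:
  assumes g: "g \<in> carrier G" and r: "acts_as_power G g r" "Pocklington.ord (p ^ m) r = p ^ k"
  shows "o_exp G p g = k"
  using coset_ord_centralizer_eq_o_exp[OF g] coset_ord_centralizer[OF g r(1)] r(2) p_gt_1 by simp

lemma o_exp_bound:
  assumes g: "g \<in> carrier G"
  shows "o_exp G p g = 0 \<or> o_exp G p g < m"
proof -
  obtain s where s: "acts_as_power G g s" using acts_as_power_exists[OF g] by blast
  thus ?thesis
    using ord_prime_power_modulus_exponent[OF prime_p] coset_ord_centralizer[OF g s]
      coset_ord_centralizer_eq_o_exp[OF g] by simp
qed

lemma exists_pow_acts_as_power:
  assumes g: "g \<in> carrier G" and r: "Pocklington.ord (p ^ m) r = p ^ o_exp G p g"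
  obtains j where "coprime j p" and "acts_as_power G (g [^] j) r"
proof -
  obtain s where s: "acts_as_power G g s" "coprime (p ^ m) s" using acts_as_power_exists[OF g] by blast
  have "Pocklington.ord (p ^ m) s = p ^ o_exp G p g"
    using coset_ord_centralizer[OF g s(1)] coset_ord_centralizer_eq_o_exp[OF g] by simp
  then obtain j where j: "coprime j p" "[s ^ j = r] (mod p ^ m)"
    using prime_power_ord_eq_imp_power_cong[OF prime_p odd_p] r by metis
  have "acts_as_power G (g [^] j) r"
    using acts_as_power_iff_cong[OF acts_as_power_nat_pow[OF g s(1)]] j(2) by simp
  thus ?thesis using that j(1) by blast
qed

lemma ord_nat_pow_coprime:
  assumes g: "g \<in> carrier G" and j: "coprime j p"
  shows "ord (g [^] (j::nat)) = ord g"
proof -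
  obtain e where "ord g = p ^ e" using dvd_order_p_powerE ord_dvd_group_order[OF g] .
  hence "coprime j (ord g)" using j by simp
  thus ?thesis by (rule pow_ord_eq_ord_iff[OF finite_carrier g, THEN iffD2])
qed

abbreviation "o_exps \<equiv> \<lambda>(b1, b2). (o_exp G p b1, o_exp G p b2)"

abbreviation "centralizer_ords \<equiv> \<lambda>(b1, b2). (int (coset_ord G C b1), int (coset_ord G C b2))"

abbreviation "ords \<equiv> \<lambda>(b1, b2). (int (ord b1), int (ord b2))"

lemma finite_bases: "finite (bases G p n1 n2)"
proof (rule finite_subset)
  show "bases G p n1 n2 \<subseteq> carrier G \<times> carrier G" by (auto simp: bases_def is_basis_def)
qed (simp add: finite_carrier)

lemma o_min_attained:
  assumes "bases G p n1 n2 \<noteq> {}"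
  obtains b where "b \<in> bases G p n1 n2" and "o_exps b = o_min G p n1 n2"
proof -
  have "Min (o_exps ` bases G p n1 n2) \<in> o_exps ` bases G p n1 n2"
    using finite_bases assms by (intro Min_in) auto
  then obtain b where "Min (o_exps ` bases G p n1 n2) = o_exps b" "b \<in> bases G p n1 n2" by (rule imageE)
  thus ?thesis by (intro that) (simp_all add: o_min_def)
qed

lemma o_min_bound:
  assumes "bases G p n1 n2 \<noteq> {}"
  shows "fst (o_min G p n1 n2) = 0 \<or> fst (o_min G p n1 n2) < m"
    and "snd (o_min G p n1 n2) = 0 \<or> snd (o_min G p n1 n2) < m"
proof -
  obtain b1 b2 where b: "(b1, b2) \<in> bases G p n1 n2" "o_exps (b1, b2) = o_min G p n1 n2"
    using o_min_attained[OF assms] by (metis prod.collapse)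
  have "b1 \<in> carrier G" "b2 \<in> carrier G" using b(1) by (auto simp: bases_def is_basis_def)
  moreover have "o_min G p n1 n2 = (o_exp G p b1, o_exp G p b2)" using b(2) by simp
  ultimately show "fst (o_min G p n1 n2) = 0 \<or> fst (o_min G p n1 n2) < m"
    and "snd (o_min G p n1 n2) = 0 \<or> snd (o_min G p n1 n2) < m"
    using o_exp_bound by auto
qed

lemma ord_r_pair:
  assumes "bases G p n1 n2 \<noteq> {}"
  shows "Pocklington.ord (p ^ m) (fst (r_pair G p m n1 n2)) = p ^ fst (o_min G p n1 n2)"
    and "Pocklington.ord (p ^ m) (snd (r_pair G p m n1 n2)) = p ^ snd (o_min G p n1 n2)"
  using ord_one_plus_prime_power[OF prime_p odd_p, of _ m 1] o_min_bound[OF assms]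
    ord_one_plus_prime_power_pow[OF prime_p odd_p o_min_bound(1)[OF assms]] prime_gt_1_nat[OF prime_p]
  by (auto simp: r_pair_def Let_def)

lemma bases_r_iff:
  "(b1, b2) \<in> bases_r G p m n1 n2 \<longleftrightarrow> (b1, b2) \<in> bases G p n1 n2
     \<and> acts_as_power G b1 (fst (r_pair G p m n1 n2)) \<and> acts_as_power G b2 (snd (r_pair G p m n1 n2))"
  by (auto simp: bases_r_def acts_as_power_def)

lemma o_exps_bases_r:
  assumes ne: "bases G p n1 n2 \<noteq> {}" and b: "(b1, b2) \<in> bases_r G p m n1 n2"
  shows "o_exps (b1, b2) = o_min G p n1 n2"
proof -
  have "b1 \<in> carrier G" "b2 \<in> carrier G" using b by (auto simp: bases_r_iff bases_def is_basis_def)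
  hence "o_exp G p b1 = fst (o_min G p n1 n2)" "o_exp G p b2 = snd (o_min G p n1 n2)"
    using o_exp_eq_if_acts_as_power ord_r_pair[OF ne] b by (auto simp: bases_r_iff)
  thus ?thesis by (simp add: prod_eq_iff)
qed

lemma exists_bases_r_same_ords:
  assumes ne: "bases G p n1 n2 \<noteq> {}"
    and b: "(b1, b2) \<in> bases G p n1 n2" and o: "o_exps (b1, b2) = o_min G p n1 n2"
  shows "\<exists>b' \<in> bases_r G p m n1 n2. ords b' = ords (b1, b2)"
proof -
  have b12: "b1 \<in> carrier G" "b2 \<in> carrier G" using b by (auto simp: bases_def is_basis_def)
  have "o_min G p n1 n2 = (o_exp G p b1, o_exp G p b2)" using o by simp
  hence "Pocklington.ord (p ^ m) (fst (r_pair G p m n1 n2)) = p ^ o_exp G p b1"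
    and "Pocklington.ord (p ^ m) (snd (r_pair G p m n1 n2)) = p ^ o_exp G p b2"
    using ord_r_pair[OF ne] by simp_all
  then obtain j1 j2 where j1: "coprime j1 p" "acts_as_power G (b1 [^] j1) (fst (r_pair G p m n1 n2))"
    and j2: "coprime j2 p" "acts_as_power G (b2 [^] j2) (snd (r_pair G p m n1 n2))"
    using exists_pow_acts_as_power b12 by metis
  have "is_basis G p n1 n2 (b1 [^] j1) (b2 [^] j2)"
    using is_basis_pow[OF finite_carrier _ j1(1) j2(1)] b by (simp add: bases_def)
  hence "(b1 [^] j1, b2 [^] j2) \<in> bases_r G p m n1 n2" using j1 j2 by (simp add: bases_r_iff bases_def)
  moreover have "ords (b1 [^] j1, b2 [^] j2) = ords (b1, b2)"
    using ord_nat_pow_coprime b12 j1(1) j2(1) by simp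
  ultimately show ?thesis by blast
qed

lemma Min_centralizer_ords:
  assumes ne: "bases G p n1 n2 \<noteq> {}"
  shows "Min (centralizer_ords ` bases G p n1 n2)
           = (int (p ^ fst (o_min G p n1 n2)), int (p ^ snd (o_min G p n1 n2)))"
proof -
  let ?pow = "map_prod (\<lambda>e. int (p ^ e)) (\<lambda>e. int (p ^ e))"
  have "centralizer_ords b = ?pow (o_exps b)" if "b \<in> bases G p n1 n2" for b
    using that coset_ord_centralizer_eq_o_exp by (auto simp: bases_def is_basis_def)
  hence "centralizer_ords ` bases G p n1 n2 = ?pow ` o_exps ` bases G p n1 n2"
    by (simp add: image_image cong: image_cong)
  moreover have "strict_mono (\<lambda>e. int (p ^ e))" using strict_mono_int_power[OF p_gt_1, of 0] by simp
  hence "mono ?pow" by (intro mono_map_prod_lex strict_mono_mono)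
  ultimately have "Min (centralizer_ords ` bases G p n1 n2) = ?pow (o_min G p n1 n2)"
    unfolding o_min_def using ne finite_bases by (simp add: mono_Min_commute)
  thus ?thesis by (simp add: map_prod_def split_def)
qed

lemma centralizer_ords_eq_Min_iff:
  assumes ne: "bases G p n1 n2 \<noteq> {}" and b: "b \<in> bases G p n1 n2"
  shows "centralizer_ords b = Min (centralizer_ords ` bases G p n1 n2) \<longleftrightarrow> o_exps b = o_min G p n1 n2"
proof -
  obtain b1 b2 where b12: "b = (b1, b2)" by (cases b)
  hence "b1 \<in> carrier G" "b2 \<in> carrier G" using b by (auto simp: bases_def is_basis_def)
  hence "centralizer_ords b = (int (p ^ o_exp G p b1), int (p ^ o_exp G p b2))"
    using coset_ord_centralizer_eq_o_exp by (simp add: b12)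
  thus ?thesis unfolding Min_centralizer_ords[OF ne] using p_gt_1 by (auto simp: b12 prod_eq_iff)
qed

lemma ords_min_bases_eq_ords_bases_r:
  assumes ne: "bases G p n1 n2 \<noteq> {}"
  shows "ords ` {b \<in> bases G p n1 n2. o_exps b = o_min G p n1 n2} = ords ` bases_r G p m n1 n2"
proof
  show "ords ` {b \<in> bases G p n1 n2. o_exps b = o_min G p n1 n2} \<subseteq> ords ` bases_r G p m n1 n2"
  proof
    fix y assume "y \<in> ords ` {b \<in> bases G p n1 n2. o_exps b = o_min G p n1 n2}"
    then obtain b1 b2 where "(b1, b2) \<in> bases G p n1 n2" "o_exps (b1, b2) = o_min G p n1 n2"
      and y: "y = ords (b1, b2)" by auto
    then obtain b' where "b' \<in> bases_r G p m n1 n2" "ords b' = y"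
      using exists_bases_r_same_ords[OF ne] by blast
    thus "y \<in> ords ` bases_r G p m n1 n2" by blast
  qed
  show "ords ` bases_r G p m n1 n2 \<subseteq> ords ` {b \<in> bases G p n1 n2. o_exps b = o_min G p n1 n2}"
    using o_exps_bases_r[OF ne] by (auto simp: bases_r_iff)
qed

lemma Max_ords_bases_r:
  assumes ne: "bases G p n1 n2 \<noteq> {}"
  shows "Max (ords ` bases_r G p m n1 n2)
           = (int (p ^ (n1 + fst (o'_max G p m n1 n2))), int (p ^ (n2 + snd (o'_max G p m n1 n2))))"
proof -
  let ?pow = "map_prod (\<lambda>e. int (p ^ (n1 + e))) (\<lambda>e. int (p ^ (n2 + e)))"
  let ?o' = "\<lambda>(b1, b2). (o'_exp G p n1 b1, o'_exp G p n2 b2)"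
  have "ords b = ?pow (?o' b)" if "b \<in> bases_r G p m n1 n2" for b
    using that ord_eq_o'_exp by (auto simp: bases_r_def bases_def is_basis_def)
  hence "ords ` bases_r G p m n1 n2 = ?pow ` ?o' ` bases_r G p m n1 n2"
    by (simp add: image_image cong: image_cong)
  moreover obtain b where "b \<in> bases G p n1 n2" "o_exps b = o_min G p n1 n2"
    using o_min_attained[OF ne] .
  hence "bases_r G p m n1 n2 \<noteq> {}" using exists_bases_r_same_ords[OF ne] by (metis prod.collapse empty_iff)
  moreover have "finite (bases_r G p m n1 n2)"
    using finite_bases by (rule rev_finite_subset) (auto simp: bases_r_def)
  moreover have "mono ?pow"
    by (intro mono_map_prod_lex strict_mono_int_power strict_mono_mono p_gt_1)
  ultimately have "Max (ords ` bases_r G p m n1 n2) = ?pow (o'_max G p m n1 n2)"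
    unfolding o'_max_def by (simp add: mono_Max_commute)
  thus ?thesis by (simp add: map_prod_def split_def)
qed

end

theorem lemma3p4:
  fixes G (structure) and p m n1 n2 :: nat
  assumes "Factorial_Ring.prime p" and "odd p"
    and "group G" and "finite (carrier G)" and "\<exists>k. card (carrier G) = p ^ k"
    and "\<not> comm_group G"
    and "\<exists>a \<in> carrier G. \<exists>b \<in> carrier G. generate G {a, b} = carrier G"
    and "\<exists>g \<in> commutator_sub G. generate G {g} = commutator_sub G"
    and "card (commutator_sub G) = p ^ m"
    and "G Mod commutator_sub G \<cong> integer_mod_group (p ^ n1) \<times>\<times> integer_mod_group (p ^ n2)"
    and "n1 \<ge> n2" and "n2 \<ge> 1"
  shows "Min ((\<lambda>(b1, b2). (int (coset_ord G (centralizer G (commutator_sub G)) b1),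
                            int (coset_ord G (centralizer G (commutator_sub G)) b2),
                            - int (group.ord G b1), - int (group.ord G b2)))
              ` bases G p n1 n2)
         = (int (p ^ fst (o_min G p n1 n2)), int (p ^ snd (o_min G p n1 n2)),
            - int (p ^ (n1 + fst (o'_max G p m n1 n2))),
            - int (p ^ (n2 + snd (o'_max G p m n1 n2))))"
proof -
  obtain c where "c \<in> commutator_sub G" "generate G {c} = commutator_sub G" using assms(8) by blast
  then interpret cyclic_commutator_p_group G p m c
    by (intro cyclic_commutator_p_group.intro cyclic_commutator_p_group_axioms.intro) (use assms in auto)
  let ?B = "bases G p n1 n2" and ?Bmin = "{b \<in> bases G p n1 n2. o_exps b = o_min G p n1 n2}"
  let ?neg = "map_prod uminus uminus :: int \<times> int \<Rightarrow> int \<times> int"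
  have ne: "?B \<noteq> {}" using bases_nonempty p_gt_1 assms(10-12) by simp
  have "?Bmin \<noteq> {}" using o_min_attained[OF ne] by blast
  moreover have "finite ?Bmin" using finite_bases by simp
  ultimately have Min_neg_ords: "Min ((\<lambda>b. ?neg (ords b)) ` ?Bmin) = ?neg (Max (ords ` ?Bmin))"
    by (simp add: antimono_Min_commute antimono_map_prod_uminus flip: image_image)
  have "(\<lambda>(b1, b2). (int (coset_ord G C b1), int (coset_ord G C b2), - int (ord b1), - int (ord b2)))
      = (\<lambda>b. (fst (centralizer_ords b), snd (centralizer_ords b), ?neg (ords b)))"
    by (simp add: fun_eq_iff split_def)
  hence "Min ((\<lambda>(b1, b2). (int (coset_ord G C b1), int (coset_ord G C b2), - int (ord b1), - int (ord b2))) ` ?B)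
      = (fst (Min (centralizer_ords ` ?B)), snd (Min (centralizer_ords ` ?B)),
         Min ((\<lambda>b. ?neg (ords b)) ` {b \<in> ?B. centralizer_ords b = Min (centralizer_ords ` ?B)}))"
    using Min_image_lex_refine[OF finite_bases ne] by simp
  also have "{b \<in> ?B. centralizer_ords b = Min (centralizer_ords ` ?B)} = ?Bmin"
    using centralizer_ords_eq_Min_iff[OF ne] by blast
  finally show ?thesis
    by (simp add: Min_neg_ords ords_min_bases_eq_ords_bases_r[OF ne] Min_centralizer_ords[OF ne]
        Max_ords_bases_r[OF ne])
qed

end
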